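(* For all integers $n$ define $B(n)=\sum_{k\in\mathbb{Z}}\binom{n}{k}^2\binom{n+k}{k}$. Then for all integers $n>0$, $B(-n) = (-1)^{n-1}B(n-1)$.
   Context: For all integers $n, k$, the binomial coefficient is defined by $\binom{n}{k} = \lim_{z \to 0} \frac{\Gamma(z+n+1)}{\Gamma(z+k+1)\Gamma(z+n-k+1)}$; this is a finite integer for all $n,k\in\mathbb{Z}$, agrees with the usual one for $n\ge0$, and satisfies $\binom{n}{k}=\binom{n}{n-k}$. For $n \ge 0$, $B(n)=\sum_{k=0}^n\binom{n}{k}^2\binom{n+k}{k}$. *)

theory Defs
  imports "HOL-Analysis.Analysis"
begin

definition gbinom :: "int \<Rightarrow> int \<Rightarrow> real" where
  "gbinom n k = Lim (at (0::real))
     (\<lambda>z. Gamma (z + of_int n + 1) / (Gamma (z + of_int k + 1) * Gamma (z + of_int n - of_int k + 1)))"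

definition Bsum :: "int \<Rightarrow> real" where
  "Bsum n = (\<Sum>\<^sub>\<infinity> k\<in>(UNIV::int set). (gbinom n k)^2 * gbinom (n + k) k)"

end

(*
  Near z = 0 one has Gamma(z + a + 1) = Gamma(z + 1) R_a(z) / z^[a < 0] with R_a continuous and
  nonzero at 0 (a rising factorial or its reciprocal).  Hence the limit defining binom(n, k) exists
  and equals the usual binomial coefficient for n >= 0, equals (-1)^k binom(k - n - 1, k) for
  n < 0 <= k, and vanishes for k < 0 when n < k.  So B(-N-1) and B(N) are finite sums over
  0 <= k <= N, namely sum (-1)^k binom(N+k,k)^2 binom(N,k) and sum binom(N,k)^2 binom(N+k,k).
  Expanding one factor binom(N+k,k) = sum_j binom(N,j) binom(k,j) (Vandermonde) and swapping the
  sums, the inner sum over k is an (N-j)-th finite difference of a binomial coefficient, which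
  evaluates to (-1)^N binom(N,j) binom(N+j,j).
*)

theory Submission
  imports Defs
begin

definition gamma_pole_order :: "int \<Rightarrow> nat" where
  "gamma_pole_order a = (if a < 0 then 1 else 0)"

definition gamma_regular_part :: "int \<Rightarrow> real \<Rightarrow> real" where
  "gamma_regular_part a z =
     (if a \<ge> 0 then pochhammer (z + 1) (nat a)
      else inverse (pochhammer (z + of_int a + 1) (nat (- a) - 1)))"

lemma add_of_int_notin_nonpos_Ints:
  fixes z :: real
  assumes "z \<notin> \<int>"
  shows "z + of_int a \<notin> \<int>\<^sub>\<le>\<^sub>0"
  using assms nonpos_Ints_subset_Ints by (metis Ints_diff Ints_of_int add_diff_cancel_right' subsetD)

lemma Gamma_add_of_int:
  fixes z :: real
  assumes z: "z \<notin> \<int>"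
  shows "Gamma (z + of_int a + 1) = Gamma (z + 1) * gamma_regular_part a z / z ^ gamma_pole_order a"
proof (cases "a \<ge> 0")
  case True
  have z1: "z + 1 \<notin> \<int>\<^sub>\<le>\<^sub>0"
    using add_of_int_notin_nonpos_Ints[OF z, of 1] by simp
  have "pochhammer (z + 1) (nat a) = Gamma (z + 1 + of_nat (nat a)) / Gamma (z + 1)"
    by (rule pochhammer_Gamma[OF z1])
  with z1 True show ?thesis
    by (simp add: gamma_regular_part_def gamma_pole_order_def Gamma_eq_zero_iff field_simps)
next
  case False
  define d where "d = nat (- a) - 1"
  have a: "of_int a = - (of_nat d :: real) - 1"
    using False by (simp add: d_def)
  have za: "z + of_int a + 1 \<notin> \<int>\<^sub>\<le>\<^sub>0"
    using add_of_int_notin_nonpos_Ints[OF z, of "a + 1"] by (simp add: add.assoc)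
  have z1: "z + 1 \<notin> \<int>\<^sub>\<le>\<^sub>0"
    using add_of_int_notin_nonpos_Ints[OF z, of 1] by simp
  have "pochhammer (z + of_int a + 1) d * z = pochhammer (z + of_int a + 1) (Suc d)"
    using a by (simp add: pochhammer_Suc)
  also have "\<dots> = Gamma (z + 1) / Gamma (z + of_int a + 1)"
    using pochhammer_Gamma[OF za, of "Suc d"] a by simp
  finally have "Gamma (z + of_int a + 1) * (pochhammer (z + of_int a + 1) d * z) = Gamma (z + 1)"
    using za by (simp add: Gamma_eq_zero_iff field_simps)
  moreover have "Gamma (z + 1) \<noteq> 0"
    using z1 Gamma_eq_zero_iff by blast
  ultimately have "Gamma (z + of_int a + 1) = Gamma (z + 1) / (pochhammer (z + of_int a + 1) d * z)"
    by (metis mult_zero_right nonzero_eq_divide_eq)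
  then show ?thesis
    using False by (simp add: gamma_regular_part_def gamma_pole_order_def d_def divide_inverse)
qed

lemma isCont_gamma_regular_part: "isCont (gamma_regular_part a) 0"
proof (cases "a \<ge> 0")
  case True
  then show ?thesis
    unfolding gamma_regular_part_def
    by (simp add: continuous_at_compose[OF _ isCont_pochhammer, unfolded o_def])
next
  case False
  define d where "d = nat (- a) - 1"
  have "pochhammer (of_int a + 1 :: real) d \<noteq> 0"
    using False by (auto simp: pochhammer_eq_0_iff d_def)
  moreover have "isCont (\<lambda>z. pochhammer (z + of_int a + 1 :: real) d) 0"
    by (simp add: continuous_at_compose[OF _ isCont_pochhammer, unfolded o_def])
  ultimately show ?thesis
    using False unfolding gamma_regular_part_def d_def
    by (simp add: continuous_intros)
qed

lemma gamma_regular_part_0: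
  "gamma_regular_part a 0 =
     (if a \<ge> 0 then fact (nat a) else inverse ((-1) ^ (nat (- a) - 1) * fact (nat (- a) - 1)))"
proof (cases "a \<ge> 0")
  case False
  define d where "d = nat (- a) - 1"
  have "of_int a + 1 = - (of_nat d :: real)"
    using False by (simp add: d_def)
  then have "gamma_regular_part a 0 = inverse (pochhammer (- of_nat d) d)"
    using False by (simp add: gamma_regular_part_def d_def add.commute)
  moreover have "pochhammer (- of_nat d :: real) d = (-1) ^ d * fact d"
    by (simp add: pochhammer_minus pochhammer_fact)
  ultimately show ?thesis
    using False by (simp add: d_def)
qed (simp add: gamma_regular_part_def pochhammer_fact)

lemma gamma_regular_part_nonzero:
  fixes z :: real
  assumes z: "z \<notin> \<int>"
  shows "gamma_regular_part a z \<noteq> 0"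
proof -
  have "pochhammer (z + of_int b) m \<noteq> 0" for b m
  proof
    assume "pochhammer (z + of_int b) m = 0"
    then obtain j where "z + of_int b = - of_nat j"
      by (auto simp: pochhammer_eq_0_iff)
    then have "z = of_int (- int j - b)"
      by simp
    with z show False
      by (metis Ints_of_int)
  qed
  from this[of 1] this[of "a + 1"] show ?thesis
    unfolding gamma_regular_part_def by (auto simp: add.assoc)
qed

lemma gbinom_eq:
  "gbinom n k =
     (if gamma_pole_order k + gamma_pole_order (n - k) = gamma_pole_order n
      then gamma_regular_part n 0 / (gamma_regular_part k 0 * gamma_regular_part (n - k) 0)
      else 0)"
proof -
  define e where "e = gamma_pole_order k + gamma_pole_order (n - k) - gamma_pole_order n"
  define R where "R z = gamma_regular_part n z /
    (Gamma (z + 1) * gamma_regular_part k z * gamma_regular_part (n - k) z)" for z :: real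
  have order_le: "gamma_pole_order n \<le> gamma_pole_order k + gamma_pole_order (n - k)"
    by (auto simp: gamma_pole_order_def)
  have "Gamma (z + of_int n + 1) / (Gamma (z + of_int k + 1) * Gamma (z + of_int n - of_int k + 1))
          = z ^ e * R z"
    if "z \<noteq> 0" "\<bar>z\<bar> < 1" for z :: real
  proof -
    have z: "z \<notin> \<int>"
      using that Ints_nonzero_abs_less1 by blast
    have "Gamma (z + 1) \<noteq> 0"
      using add_of_int_notin_nonpos_Ints[OF z, of 1] by (simp add: Gamma_eq_zero_iff)
    moreover have "z ^ (gamma_pole_order k + gamma_pole_order (n - k)) = z ^ e * z ^ gamma_pole_order n"
      using order_le by (simp add: e_def flip: power_add)
    moreover have "z + of_int n - of_int k + 1 = z + of_int (n - k) + 1"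
      by simp
    ultimately show ?thesis
      using gamma_regular_part_nonzero[OF z] \<open>z \<noteq> 0\<close>
      by (simp only: Gamma_add_of_int[OF z]) (simp add: R_def field_simps power_add)
  qed
  then have "\<forall>\<^sub>F z in at 0. z ^ e * R z =
      Gamma (z + of_int n + 1) / (Gamma (z + of_int k + 1) * Gamma (z + of_int n - of_int k + 1))"
    unfolding eventually_at by (intro exI[of _ 1]) auto
  moreover have "isCont (\<lambda>z. z ^ e * R z) 0"
    unfolding R_def
    by (intro continuous_intros isCont_gamma_regular_part isCont_Gamma)
       (auto simp: gamma_regular_part_0)
  ultimately have "gbinom n k = 0 ^ e * R 0"
    unfolding gbinom_def isCont_def by (intro tendsto_Lim) (auto elim: Lim_transform_eventually)
  then show ?thesis
    using order_le by (auto simp: R_def e_def)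
qed

lemma gbinom_nonneg:
  assumes "n \<ge> 0"
  shows "gbinom n k = (if 0 \<le> k \<and> k \<le> n then of_nat (nat n choose nat k) else 0)"
proof -
  have "fact (nat n) / (fact (nat k) * fact (nat (n - k))) = real (nat n choose nat k)"
    if "0 \<le> k" "k \<le> n"
    using that by (subst binomial_fact) (auto simp: nat_diff_distrib)
  with assms show ?thesis
    by (auto simp: gbinom_eq gamma_pole_order_def gamma_regular_part_0)
qed

lemma gbinom_neg_upper:
  assumes "n < 0" "k \<ge> 0"
  shows "gbinom n k = (-1) ^ nat k * of_nat ((nat (- n) - 1 + nat k) choose nat k)"
proof -
  define d where "d = nat (- n) - 1"
  have d: "nat (- (n - k)) - 1 = d + nat k"
    using assms by (simp add: d_def)
  have "gbinom n k = gamma_regular_part n 0 / (gamma_regular_part k 0 * gamma_regular_part (n - k) 0)"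
    using assms by (simp add: gbinom_eq gamma_pole_order_def)
  also have "\<dots> = inverse ((-1) ^ d * fact d) / (fact (nat k) * inverse ((-1) ^ (d + nat k) * fact (d + nat k)))"
    using assms d by (simp add: gamma_regular_part_0 d_def)
  also have "\<dots> = (-1) ^ nat k * (fact (d + nat k) / (fact (nat k) * fact d))"
    by (simp add: field_simps power_add)
  also have "fact (d + nat k) / (fact (nat k) * fact d) = real ((d + nat k) choose nat k)"
    by (subst binomial_fact) auto
  finally show ?thesis
    by (simp add: d_def)
qed

lemma gbinom_neg_neg:
  assumes "n < 0" "k < 0" "n < k"
  shows "gbinom n k = 0"
  using assms by (simp add: gbinom_eq gamma_pole_order_def)

lemma sum_alternating_choose_Suc:
  fixes f :: "nat \<Rightarrow> 'a::comm_ring_1"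
  shows "(\<Sum>i\<le>Suc M. (-1) ^ i * of_nat (Suc M choose i) * f i)
       = (\<Sum>i\<le>M. (-1) ^ i * of_nat (M choose i) * (f i - f (Suc i)))"
proof -
  have "(\<Sum>i\<le>Suc M. (-1) ^ i * of_nat (Suc M choose i) * f i)
      = f 0 + (\<Sum>i\<le>M. (-1) ^ Suc i * of_nat (M choose Suc i) * f (Suc i)
                           - (-1) ^ i * of_nat (M choose i) * f (Suc i))"
  proof -
    have "(-1) ^ Suc i * of_nat (Suc M choose Suc i) * f (Suc i)
        = (-1) ^ Suc i * of_nat (M choose Suc i) * f (Suc i) - (-1) ^ i * of_nat (M choose i) * f (Suc i)"
      for i
      by (simp add: algebra_simps)
    then show ?thesis
      unfolding sum.atMost_Suc_shift by simp
  qed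
  also have "\<dots> = f 0 + (\<Sum>i\<le>M. (-1) ^ Suc i * of_nat (M choose Suc i) * f (Suc i))
            - (\<Sum>i\<le>M. (-1) ^ i * of_nat (M choose i) * f (Suc i))"
    by (simp add: sum_subtractf)
  also have "f 0 + (\<Sum>i\<le>M. (-1) ^ Suc i * of_nat (M choose Suc i) * f (Suc i))
      = (\<Sum>i\<le>Suc M. (-1) ^ i * of_nat (M choose i) * f i)"
    by (subst sum.atMost_Suc_shift) simp
  also have "\<dots> = (\<Sum>i\<le>M. (-1) ^ i * of_nat (M choose i) * f i)"
    by (simp add: binomial_eq_0)
  finally show ?thesis
    by (simp add: sum_subtractf algebra_simps)
qed

lemma sum_alternating_choose_choose:
  assumes "M \<le> b"
  shows "(\<Sum>i\<le>M. (-1) ^ i * of_nat (M choose i) * of_nat ((a + i) choose b))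
       = ((-1) ^ M * of_nat (a choose (b - M)) :: 'a::comm_ring_1)"
  using assms
proof (induction M arbitrary: b)
  case (Suc M)
  then obtain c where b: "b = Suc c" and "M \<le> c"
    by (cases b) auto
  have pascal: "of_nat ((a + i) choose b) - of_nat ((a + Suc i) choose b) = - (of_nat ((a + i) choose c) :: 'a)" for i
    by (simp add: b)
  have "(\<Sum>i\<le>Suc M. (-1) ^ i * of_nat (Suc M choose i) * of_nat ((a + i) choose b))
      = (\<Sum>i\<le>M. (-1) ^ i * of_nat (M choose i) *
           (of_nat ((a + i) choose b) - of_nat ((a + Suc i) choose b)) :: 'a)"
    by (rule sum_alternating_choose_Suc)
  also have "\<dots> = - (\<Sum>i\<le>M. (-1) ^ i * of_nat (M choose i) * of_nat ((a + i) choose c))"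
    by (simp only: pascal) (simp add: sum_negf)
  finally show ?case
    using Suc.IH[OF \<open>M \<le> c\<close>] by (simp add: b)
qed simp

lemma choose_add_eq_sum_choose_mult:
  assumes "k \<le> N"
  shows "(N + k) choose k = (\<Sum>j\<le>N. (N choose j) * (k choose j))"
proof -
  have "(N + k) choose k = (\<Sum>j\<le>k. (N choose j) * (k choose (k - j)))"
    by (rule vandermonde[symmetric])
  also have "\<dots> = (\<Sum>j\<le>k. (N choose j) * (k choose j))"
    by (intro sum.cong refl) (metis atMost_iff binomial_symmetric)
  also have "\<dots> = (\<Sum>j\<le>N. (N choose j) * (k choose j))"
    by (rule sum.mono_neutral_left) (use assms in auto)
  finally show ?thesis .
qed

lemma sum_alternating_choose_add_choose_mult:
  assumes "j \<le> N"
  shows "(\<Sum>k\<le>N. (-1) ^ k * of_nat ((N + k) choose k) * of_nat (N choose k) * of_nat (k choose j))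
       = ((-1) ^ N * of_nat (N choose j) * of_nat ((N + j) choose j) :: 'a::comm_ring_1)"
proof -
  define f :: "nat \<Rightarrow> 'a" where
    "f k = (-1) ^ k * of_nat ((N + k) choose k) * of_nat (N choose k) * of_nat (k choose j)" for k
  have "(\<Sum>k\<le>N. f k) = (\<Sum>k\<in>{j..N}. f k)"
    by (rule sum.mono_neutral_right) (auto simp: f_def binomial_eq_0)
  also have "\<dots> = (\<Sum>i\<le>N - j. f (i + j))"
    using sum.shift_bounds_cl_nat_ivl[of f 0 j "N - j"] assms by (simp add: atLeast0AtMost)
  also have "\<dots> = (-1) ^ j * of_nat (N choose j) *
      (\<Sum>i\<le>N - j. (-1) ^ i * of_nat ((N - j) choose i) * of_nat ((N + j + i) choose N))"
    unfolding sum_distrib_left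
  proof (intro sum.cong refl)
    fix i assume "i \<in> {..N - j}"
    then have mult: "(N choose (i + j)) * ((i + j) choose j) = (N choose j) * ((N - j) choose i)"
      using choose_mult[of j "i + j" N] assms by simp
    have symm: "(N + (i + j)) choose (i + j) = (N + j + i) choose N"
      using binomial_symmetric[of "i + j" "N + (i + j)"] by (simp add: add_ac)
    have "f (i + j) = (-1) ^ j * (-1) ^ i * of_nat ((N + j + i) choose N) *
        of_nat ((N choose (i + j)) * ((i + j) choose j))"
      unfolding f_def power_add symm by (simp add: ac_simps)
    then show "f (i + j) = (-1) ^ j * of_nat (N choose j) *
        ((-1) ^ i * of_nat ((N - j) choose i) * of_nat ((N + j + i) choose N))"
      unfolding mult by (simp add: ac_simps)
  qed
  also have "\<dots> = (-1) ^ j * of_nat (N choose j) * ((-1) ^ (N - j) * of_nat ((N + j) choose j))"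
    using assms by (simp add: sum_alternating_choose_choose)
  finally show ?thesis
    using assms by (simp add: f_def ac_simps flip: power_add)
qed

lemma sum_alternating_choose_add_square:
  "(\<Sum>k\<le>N. (-1) ^ k * of_nat ((N + k) choose k) ^ 2 * of_nat (N choose k))
     = ((-1) ^ N * (\<Sum>k\<le>N. of_nat (N choose k) ^ 2 * of_nat ((N + k) choose k)) :: 'a::comm_ring_1)"
proof -
  have "(\<Sum>k\<le>N. (-1) ^ k * of_nat ((N + k) choose k) ^ 2 * of_nat (N choose k))
      = (\<Sum>k\<le>N. \<Sum>j\<le>N. of_nat (N choose j) *
          ((-1) ^ k * of_nat ((N + k) choose k) * of_nat (N choose k) * of_nat (k choose j)) :: 'a)"
  proof (intro sum.cong refl)
    fix k assume "k \<in> {..N}"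
    then have "(of_nat ((N + k) choose k) :: 'a) = (\<Sum>j\<le>N. of_nat (N choose j) * of_nat (k choose j))"
      by (simp add: choose_add_eq_sum_choose_mult)
    then show "(-1) ^ k * of_nat ((N + k) choose k) ^ 2 * of_nat (N choose k) = (\<Sum>j\<le>N. of_nat (N choose j) *
          ((-1) ^ k * of_nat ((N + k) choose k) * of_nat (N choose k) * of_nat (k choose j)) :: 'a)"
      by (simp add: power2_eq_square sum_distrib_left sum_distrib_right ac_simps)
  qed
  also have "\<dots> = (\<Sum>j\<le>N. of_nat (N choose j) * ((-1) ^ N * of_nat (N choose j) * of_nat ((N + j) choose j)))"
    by (subst sum.swap) (simp add: sum_distrib_left[symmetric] sum_alternating_choose_add_choose_mult)
  finally show ?thesis
    by (simp add: sum_distrib_left power2_eq_square ac_simps)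
qed

lemma infsum_int_eq_sum_atMost:
  fixes f :: "int \<Rightarrow> 'a::{comm_monoid_add, t2_space}"
  assumes "\<And>k. k < 0 \<or> k > int N \<Longrightarrow> f k = 0"
  shows "(\<Sum>\<^sub>\<infinity>k. f k) = (\<Sum>k\<le>N. f (int k))"
proof -
  have "k < 0 \<or> k > int N" if "k \<notin> int ` {..N}" for k
  proof (rule ccontr)
    assume "\<not> (k < 0 \<or> k > int N)"
    then have "k = int (nat k)" "nat k \<in> {..N}"
      by auto
    with that show False
      by blast
  qed
  then have "(\<Sum>\<^sub>\<infinity>k. f k) = (\<Sum>\<^sub>\<infinity>k\<in>int ` {..N}. f k)"
    by (intro infsum_cong_neutral) (auto intro: assms)
  also have "\<dots> = (\<Sum>k\<le>N. f (int k))"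
    by (simp add: sum.reindex)
  finally show ?thesis .
qed

lemma Bsum_of_nat:
  "Bsum (int N) = (\<Sum>k\<le>N. of_nat (N choose k) ^ 2 * of_nat ((N + k) choose k))"
proof -
  have "Bsum (int N) = (\<Sum>k\<le>N. gbinom (int N) (int k) ^ 2 * gbinom (int N + int k) (int k))"
    unfolding Bsum_def by (rule infsum_int_eq_sum_atMost) (auto simp: gbinom_nonneg)
  then show ?thesis
    by (simp add: gbinom_nonneg flip: of_nat_add)
qed

lemma Bsum_neg:
  "Bsum (- int N - 1) = (\<Sum>k\<le>N. (-1) ^ k * of_nat ((N + k) choose k) ^ 2 * of_nat (N choose k))"
proof -
  have "Bsum (- int N - 1) =
      (\<Sum>k\<le>N. gbinom (- int N - 1) (int k) ^ 2 * gbinom (- int N - 1 + int k) (int k))"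
    unfolding Bsum_def
    by (rule infsum_int_eq_sum_atMost) (auto simp: gbinom_neg_neg gbinom_nonneg)
  also have "\<dots> = (\<Sum>k\<le>N. (-1) ^ k * of_nat ((N + k) choose k) ^ 2 * of_nat (N choose k))"
  proof (intro sum.cong refl)
    fix k assume "k \<in> {..N}"
    then have "gbinom (- int N - 1 + int k) (int k) = (-1) ^ k * of_nat (N choose k)"
      by (simp add: gbinom_neg_upper nat_diff_distrib nat_add_distrib)
    moreover have "gbinom (- int N - 1) (int k) = (-1) ^ k * of_nat ((N + k) choose k)"
      by (simp add: gbinom_neg_upper nat_add_distrib)
    ultimately show "gbinom (- int N - 1) (int k) ^ 2 * gbinom (- int N - 1 + int k) (int k)
        = (-1) ^ k * of_nat ((N + k) choose k) ^ 2 * of_nat (N choose k)"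
      by (simp add: power_mult_distrib flip: power_mult)
  qed
  finally show ?thesis .
qed

theorem mainTheorem7:
  fixes n :: int
  assumes "n > 0"
  shows "Bsum (- n) = (-1) ^ nat (n - 1) * Bsum (n - 1)"
proof -
  define N where "N = nat (n - 1)"
  have n: "n = int N + 1"
    using assms by (simp add: N_def)
  show ?thesis
    using Bsum_neg[of N] Bsum_of_nat[of N] sum_alternating_choose_add_square[of N]
    by (simp add: n)
qed

end
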